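(* In the simplified model with conditional inclusion lists, regardless of the payment rule, if $$B_1> f_{BP}+ r\cdot s\cdot\max\{c_{block}-w+1,\ 0\},$$ then censoring $t_0$ (omitting it from the block, while keeping the block approved) is a dominant strategy for the block producer; consequently there is no Nash equilibrium in which $t_0$ is included in the block.
   Context: Simplified model (single slot, complete information, Nash equilibrium). Players: a block producer and $m$ includers with distinct orders $1,\dots,m$. A mempool $M$ of $w$ user transactions, each of size $s>0$; $t_0\in M$ is a target transaction. Each inclusion list holds at most $c_{Incl}$ transactions and the block at most $c_{block}$. Each includer chooses an inclusion list consisting of transactions from $M$ and/or fake transactions it creates; then the block producer, seeing all lists, chooses a block consisting of transactions from $M$ and/or fake transactions it creates. No party may add transactions to the mempool. Every transaction in an approved block pays burning fee $r\cdot s$ ($r\ge0$); for fake transactions this is paid by their creator. Processing costs are zero. Conditional inclusion lists: the attesters reject the block iff some transaction appearing in an inclusion list is missing from the block while the block contains fewer than $c_{block}$ transactions. Unconditional inclusion lists: the block is rejected iff some transaction in an inclusion list is missing from the block. If the block is rejected, the block producer and includers receive no fees. Payments: if $t_0$ is in an approved block, the block producer receives $f_{BP}\ge0$ from $t_0$ (whether or not $t_0$ is in a list); the includers collectively receive at most $f_{CM}\ge0$ from $t_0$, and only if $t_0$ is in some inclusion list and in the approved block. $sum$ denotes the block producer's total block rewards (sum of its fees from its block). An external briber pays the block producer $B_1$ if $t_0$ is not in its block, and pays includer $j$ the amount $B^j$ if $t_0$ is not in its inclusion list. Each player's utility is fees received plus bribes received minus burning fees paid for its own fake transactions in an approved block.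 *)

theory Defs
  imports Main "HOL.Real"
begin

(* Transactions: user transactions of the mempool (Mem t), and fake transactions
   Fake i k created by party i (i = 0: block producer, i = j in {1..m}: includer j),
   k being an index so that every party can create arbitrarily many fakes. *)
datatype 'a txn = Mem 'a | Fake nat nat

type_synonym 'a profile = "nat \<Rightarrow> 'a txn set"   (* inclusion list of includer j *)

(* Payment rule (left abstract): the block producer's fee from each non-target
   user transaction in its approved block (may depend on the inclusion lists),
   the includers' shares of the target's fee, and includers' other fees. *)
record 'a payrule =
  bp_fee :: "'a profile \<Rightarrow> 'a \<Rightarrow> real"
  incl_fee_t0 :: "nat \<Rightarrow> 'a profile \<Rightarrow> real"
  incl_fee_other :: "nat \<Rightarrow> 'a profile \<Rightarrow> 'a txn set \<Rightarrow> real"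

record 'a game =
  mempool :: "'a set"
  target :: 'a
  n_incl :: nat
  cap_incl :: nat
  cap_block :: nat
  tx_size :: real
  burn_rate :: real
  fee_BP :: real
  fee_CM :: real
  bribe_BP :: real
  bribe_incl :: "nat \<Rightarrow> real"
  payment :: "'a payrule"

definition fakes_of :: "nat \<Rightarrow> 'a txn set \<Rightarrow> 'a txn set" where
  "fakes_of i X = X \<inter> range (Fake i)"

definition valid_list :: "'a game \<Rightarrow> nat \<Rightarrow> 'a txn set \<Rightarrow> bool" where
  "valid_list G j L \<longleftrightarrow> finite L \<and> card L \<le> cap_incl G \<and>
     L \<subseteq> Mem ` mempool G \<union> range (Fake j)"

definition valid_profile :: "'a game \<Rightarrow> 'a profile \<Rightarrow> bool" where
  "valid_profile G Ls \<longleftrightarrow> (\<forall>j. (j \<in> {1..n_incl G} \<longrightarrow> valid_list G j (Ls j))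
      \<and> (j \<notin> {1..n_incl G} \<longrightarrow> Ls j = {}))"

definition valid_block :: "'a game \<Rightarrow> 'a txn set \<Rightarrow> bool" where
  "valid_block G b \<longleftrightarrow> finite b \<and> card b \<le> cap_block G \<and>
     b \<subseteq> Mem ` mempool G \<union> range (Fake 0)"

definition approved_cond :: "'a game \<Rightarrow> 'a profile \<Rightarrow> 'a txn set \<Rightarrow> bool" where
  "approved_cond G Ls b \<longleftrightarrow>
     \<not> ((\<exists>j\<in>{1..n_incl G}. \<exists>t\<in>Ls j. t \<notin> b) \<and> card b < cap_block G)"

definition admissible_payrule :: "'a game \<Rightarrow> bool" where
  "admissible_payrule G \<longleftrightarrow>
     (\<forall>Ls t. bp_fee (payment G) Ls t \<ge> 0) \<and>
     (\<forall>j Ls. incl_fee_t0 (payment G) j Ls \<ge> 0) \<and>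
     (\<forall>Ls. (\<Sum>j\<in>{1..n_incl G}. incl_fee_t0 (payment G) j Ls) \<le> fee_CM G)"

definition util_BP :: "'a game \<Rightarrow> 'a profile \<Rightarrow> 'a txn set \<Rightarrow> real" where
  "util_BP G Ls b =
     (if approved_cond G Ls b then
        (if Mem (target G) \<in> b then fee_BP G else 0)
        + (\<Sum>t\<in>{t\<in>mempool G. t \<noteq> target G \<and> Mem t \<in> b}. bp_fee (payment G) Ls t)
        - burn_rate G * tx_size G * real (card (fakes_of 0 b))
      else 0)
     + (if Mem (target G) \<notin> b then bribe_BP G else 0)"

definition util_incl :: "'a game \<Rightarrow> nat \<Rightarrow> 'a profile \<Rightarrow> 'a txn set \<Rightarrow> real" where
  "util_incl G j Ls b =
     (if approved_cond G Ls b then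
        (if Mem (target G) \<in> b \<and> (\<exists>i\<in>{1..n_incl G}. Mem (target G) \<in> Ls i)
           then incl_fee_t0 (payment G) j Ls else 0)
        + incl_fee_other (payment G) j Ls b
        - burn_rate G * tx_size G * real (card (fakes_of j b))
      else 0)
     + (if Mem (target G) \<notin> Ls j then bribe_incl G j else 0)"

definition valid_bp_strategy :: "'a game \<Rightarrow> ('a profile \<Rightarrow> 'a txn set) \<Rightarrow> bool" where
  "valid_bp_strategy G \<sigma> \<longleftrightarrow> (\<forall>Ls. valid_profile G Ls \<longrightarrow> valid_block G (\<sigma> Ls))"

definition is_NE :: "'a game \<Rightarrow> 'a profile \<Rightarrow> ('a profile \<Rightarrow> 'a txn set) \<Rightarrow> bool" where
  "is_NE G Ls \<sigma> \<longleftrightarrow> valid_profile G Ls \<and> valid_bp_strategy G \<sigma> \<and>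
     (\<forall>j\<in>{1..n_incl G}. \<forall>L. valid_list G j L \<longrightarrow>
        util_incl G j (Ls(j := L)) (\<sigma> (Ls(j := L))) \<le> util_incl G j Ls (\<sigma> Ls)) \<and>
     (\<forall>\<sigma>'. valid_bp_strategy G \<sigma>' \<longrightarrow> util_BP G Ls (\<sigma>' Ls) \<le> util_BP G Ls (\<sigma> Ls))"

end

theory Submission
  imports Defs
begin

(* Proof idea: whatever block b containing t0 the producer considers, it can instead build b'
   from all non-target mempool transactions of b, further non-target mempool transactions, and
   its own fake transactions, until b' is full. Under conditional inclusion lists a full block is
   always approved, so b' keeps every fee of b except f_BP, earns the bribe B_1, and pays the
   burning fee for at most max{c_block - w + 1, 0} fakes: those are needed only when the w - 1
   non-target transactions do not fill the block. *)

definition padded_block :: "nat \<Rightarrow> 'a set \<Rightarrow> 'a txn set" where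
  "padded_block c S = Mem ` S \<union> Fake 0 ` {..<c - card S}"

lemma Mem_in_padded_block [simp]: "Mem t \<in> padded_block c S \<longleftrightarrow> t \<in> S"
  by (auto simp: padded_block_def)

lemma fakes_of_padded_block: "fakes_of 0 (padded_block c S) = Fake 0 ` {..<c - card S}"
  by (auto simp: fakes_of_def padded_block_def)

lemma card_fakes_of_padded_block: "card (fakes_of 0 (padded_block c S)) = c - card S"
  by (simp add: fakes_of_padded_block card_image inj_on_def)

lemma card_padded_block:
  assumes "finite S" and "card S \<le> c"
  shows "card (padded_block c S) = c"
proof -
  have "card (padded_block c S) = card (Mem ` S) + card (Fake 0 ` {..<c - card S} :: 'a txn set)"
    unfolding padded_block_def using assms(1) by (auto intro: card_Un_disjoint)
  with assms(2) show ?thesis by (simp add: card_image inj_on_def)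
qed

lemma valid_block_padded_block:
  assumes "finite S" and "S \<subseteq> mempool G" and "card S \<le> cap_block G"
  shows "valid_block G (padded_block (cap_block G) S)"
  using assms card_padded_block[OF assms(1,3)]
  by (auto simp: valid_block_def padded_block_def)

lemma approved_cond_if_full: "card b = cap_block G \<Longrightarrow> approved_cond G Ls b"
  by (simp add: approved_cond_def)

lemma util_BP_censoring:
  assumes "approved_cond G Ls b" and "Mem (target G) \<notin> b"
  shows "util_BP G Ls b =
           (\<Sum>t\<in>{t\<in>mempool G. t \<noteq> target G \<and> Mem t \<in> b}. bp_fee (payment G) Ls t)
           - burn_rate G * tx_size G * real (card (fakes_of 0 b)) + bribe_BP G"
  using assms by (simp add: util_BP_def)

lemma util_BP_including_target_le:
  assumes "admissible_payrule G" and "burn_rate G \<ge> 0" and "tx_size G \<ge> 0"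
    and "fee_BP G \<ge> 0" and "Mem (target G) \<in> b"
  shows "util_BP G Ls b \<le>
           fee_BP G + (\<Sum>t\<in>{t\<in>mempool G. t \<noteq> target G \<and> Mem t \<in> b}. bp_fee (payment G) Ls t)"
proof -
  have "(\<Sum>t\<in>{t\<in>mempool G. t \<noteq> target G \<and> Mem t \<in> b}. bp_fee (payment G) Ls t) \<ge> 0"
    using assms(1) by (intro sum_nonneg) (simp add: admissible_payrule_def)
  moreover have "burn_rate G * tx_size G * real (card (fakes_of 0 b)) \<ge> 0"
    using assms(2,3) by simp
  ultimately show ?thesis
    using assms(4,5) by (simp add: util_BP_def)
qed

lemma obtain_full_censoring_block:
  fixes G :: "'a game"
  assumes fin: "finite (mempool G)" and target: "target G \<in> mempool G" and b: "valid_block G b"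
  obtains b' where "valid_block G b'" and "card b' = cap_block G" and "Mem (target G) \<notin> b'"
    and "{t\<in>mempool G. t \<noteq> target G \<and> Mem t \<in> b} \<subseteq> {t\<in>mempool G. t \<noteq> target G \<and> Mem t \<in> b'}"
    and "real (card (fakes_of 0 b')) \<le> max (real (cap_block G) - real (card (mempool G)) + 1) 0"
proof -
  let ?c = "cap_block G"
  define M where "M = mempool G - {target G}"
  define T where "T = {t\<in>mempool G. t \<noteq> target G \<and> Mem t \<in> b}"
  have "finite M" and card_M: "card M = card (mempool G) - 1"
    using fin target by (simp_all add: M_def)
  have T_M: "T \<subseteq> M" by (auto simp: T_def M_def)
  have "card T \<le> ?c"
  proof -
    have "card T = card (Mem ` T)" by (simp add: card_image inj_on_def)
    also have "\<dots> \<le> card b" using b by (intro card_mono) (auto simp: valid_block_def T_def)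
    finally show ?thesis using b by (simp add: valid_block_def)
  qed
  moreover have "card T \<le> card M" using T_M \<open>finite M\<close> by (rule card_mono[rotated])
  ultimately obtain S where "T \<subseteq> S" and S_M: "S \<subseteq> M" and card_S: "card S = min ?c (card M)"
    using exists_subset_between[OF _ _ T_M \<open>finite M\<close>] by (metis min.bounded_iff min.cobounded2)
  have "finite S" using S_M \<open>finite M\<close> finite_subset by blast
  show thesis
  proof
    show "valid_block G (padded_block ?c S)"
      using \<open>finite S\<close> S_M card_S by (intro valid_block_padded_block) (auto simp: M_def)
    show "card (padded_block ?c S) = ?c"
      using \<open>finite S\<close> card_S by (intro card_padded_block) auto
    show "Mem (target G) \<notin> padded_block ?c S"
      using S_M by (auto simp: M_def)
    show "{t\<in>mempool G. t \<noteq> target G \<and> Mem t \<in> b} \<subseteq>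
          {t\<in>mempool G. t \<noteq> target G \<and> Mem t \<in> padded_block ?c S}"
      using \<open>T \<subseteq> S\<close> by (auto simp: T_def)
    show "real (card (fakes_of 0 (padded_block ?c S))) \<le> max (real ?c - real (card (mempool G)) + 1) 0"
      using card_S card_M by (auto simp: card_fakes_of_padded_block)
  qed
qed

lemma censoring_dominates:
  fixes G :: "'a game"
  assumes fin: "finite (mempool G)" and target: "target G \<in> mempool G"
    and size: "tx_size G \<ge> 0" and burn: "burn_rate G \<ge> 0" and fee: "fee_BP G \<ge> 0"
    and adm: "admissible_payrule G"
    and bribe: "bribe_BP G > fee_BP G + burn_rate G * tx_size G *
           max (real (cap_block G) - real (card (mempool G)) + 1) 0"
    and b: "valid_block G b" and t0_in_b: "Mem (target G) \<in> b"
  shows "\<exists>b'. valid_block G b' \<and> approved_cond G Ls b' \<and> Mem (target G) \<notin> b' \<and>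
              util_BP G Ls b' > util_BP G Ls b"
proof -
  let ?fee = "bp_fee (payment G) Ls"
  let ?txns = "\<lambda>b. {t\<in>mempool G. t \<noteq> target G \<and> Mem t \<in> b}"
  obtain b' where valid': "valid_block G b'" and full': "card b' = cap_block G"
    and censored': "Mem (target G) \<notin> b'" and txns': "?txns b \<subseteq> ?txns b'"
    and fakes': "real (card (fakes_of 0 b')) \<le> max (real (cap_block G) - real (card (mempool G)) + 1) 0"
    using obtain_full_censoring_block[OF fin target b] .
  have approved': "approved_cond G Ls b'" using full' by (rule approved_cond_if_full)
  have burnt: "burn_rate G * tx_size G * real (card (fakes_of 0 b')) \<le>
               burn_rate G * tx_size G * max (real (cap_block G) - real (card (mempool G)) + 1) 0"
    using fakes' burn size by (intro mult_left_mono) auto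
  have "sum ?fee (?txns b) \<le> sum ?fee (?txns b')"
    using fin txns' adm by (intro sum_mono2) (auto simp: admissible_payrule_def)
  moreover have "util_BP G Ls b \<le> fee_BP G + sum ?fee (?txns b)"
    using adm burn size fee t0_in_b by (rule util_BP_including_target_le)
  moreover have "util_BP G Ls b' = sum ?fee (?txns b') - burn_rate G * tx_size G * real (card (fakes_of 0 b'))
                                   + bribe_BP G"
    using approved' censored' by (rule util_BP_censoring)
  ultimately have "util_BP G Ls b' > util_BP G Ls b" using burnt bribe by linarith
  with valid' approved' censored' show ?thesis by blast
qed

lemma is_NE_bp_best_response:
  assumes "is_NE G Ls \<sigma>" and "valid_block G b"
  shows "util_BP G Ls b \<le> util_BP G Ls (\<sigma> Ls)"
proof -
  define \<sigma>' where "\<sigma>' = (\<lambda>Ls'. if Ls' = Ls then b else {})"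
  have "valid_bp_strategy G \<sigma>'"
    using assms(2) by (auto simp: valid_bp_strategy_def \<sigma>'_def valid_block_def)
  with assms(1) have "util_BP G Ls (\<sigma>' Ls) \<le> util_BP G Ls (\<sigma> Ls)" by (auto simp: is_NE_def)
  thus ?thesis by (simp add: \<sigma>'_def)
qed

lemma is_NE_block_valid: "is_NE G Ls \<sigma> \<Longrightarrow> valid_block G (\<sigma> Ls)"
  by (simp add: is_NE_def valid_bp_strategy_def)

theorem mainTheorem6:
  fixes G :: "'a game"
  assumes "finite (mempool G)"
    and "target G \<in> mempool G"
    and "tx_size G > 0"
    and "burn_rate G \<ge> 0"
    and "fee_BP G \<ge> 0"
    and "fee_CM G \<ge> 0"
    and "admissible_payrule G"
    and "bribe_BP G > fee_BP G + burn_rate G * tx_size G *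
           max (real (cap_block G) - real (card (mempool G)) + 1) 0"
  shows "(\<forall>Ls b. valid_profile G Ls \<and> valid_block G b \<and> Mem (target G) \<in> b \<longrightarrow>
            (\<exists>b'. valid_block G b' \<and> approved_cond G Ls b' \<and> Mem (target G) \<notin> b' \<and>
                  util_BP G Ls b' > util_BP G Ls b))
       \<and> (\<forall>Ls \<sigma>. is_NE G Ls \<sigma> \<longrightarrow> Mem (target G) \<notin> \<sigma> Ls)"
proof -
  note dominates = censoring_dominates[OF assms(1,2) less_imp_le[OF assms(3)] assms(4,5,7,8)]
  have "Mem (target G) \<notin> \<sigma> Ls" if NE: "is_NE G Ls \<sigma>" for Ls \<sigma>
  proof
    assume "Mem (target G) \<in> \<sigma> Ls"
    then obtain b' where "valid_block G b'" and "util_BP G Ls b' > util_BP G Ls (\<sigma> Ls)"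
      using dominates[OF is_NE_block_valid[OF NE]] by blast
    with is_NE_bp_best_response[OF NE] show False by fastforce
  qed
  with dominates show ?thesis by blast
qed

end
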